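(* Let $\mathcal H_A,\mathcal H_B$ be finite-dimensional Hilbert spaces, $U$ a unitary on $\mathcal H_A\otimes\mathcal H_B$, $\beta$ a density operator on $\mathcal H_B$, and let $\mathcal E[X]=\operatorname{Tr}_B[U(X\otimes\beta)U^\dagger]$. Let $\alpha$ be a density operator on $\mathcal H_A$ such that $\mathcal E[\alpha]$ is invertible. Then the Petz recovery map of $\mathcal E$ with reference $\alpha$, $$\hat{\mathcal E}_\alpha[X]=\sqrt{\alpha}\,\mathcal E^\dagger\!\left[\mathcal E[\alpha]^{-1/2}X\,\mathcal E[\alpha]^{-1/2}\right]\sqrt\alpha,$$ satisfies $$\hat{\mathcal E}_\alpha[X]=\operatorname{Tr}_B\!\left[U^\dagger\,\mathcal A_{\Omega}[X]\,U\right],\qquad \Omega:=U(\alpha\otimes\beta)U^\dagger,$$ where for a state $\Omega$ on $\mathcal H_A\otimes\mathcal H_B$ with $\operatorname{Tr}_B\Omega$ invertible, $$\mathcal A_{\Omega}[X]=\sqrt{\Omega}\left[\left((\operatorname{Tr}_B\Omega)^{-1/2}\,X\,(\operatorname{Tr}_B\Omega)^{-1/2}\right)\otimes\mathbb 1_B\right]\sqrt{\Omega}.$$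
   Context: $\mathcal E^\dagger$ denotes the adjoint map with respect to the Hilbert–Schmidt inner product, defined by $\operatorname{Tr}(\mathcal E[X]Y)=\operatorname{Tr}(X\mathcal E^\dagger[Y])$ for all operators $X,Y$. $\operatorname{Tr}_B$ is the partial trace over $\mathcal H_B$. *)

theory Defs
  imports "Jordan_Normal_Form.Matrix"
begin

text \<open>Finite-dimensional Hilbert spaces H_A, H_B are modelled as C^dA, C^dB;
operators are complex matrices. H_A tensor H_B is C^(dA*dB) with basis index
a*dB + b (Kronecker convention).\<close>

definition dag :: "complex mat \<Rightarrow> complex mat" where
  "dag A = mat (dim_col A) (dim_row A) (\<lambda>(i,j). cnj (A $$ (j,i)))"

definition tr :: "complex mat \<Rightarrow> complex" where
  "tr A = (\<Sum>i<dim_row A. A $$ (i,i))"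

definition tensor :: "complex mat \<Rightarrow> complex mat \<Rightarrow> complex mat" where
  "tensor A B = mat (dim_row A * dim_row B) (dim_col A * dim_col B)
     (\<lambda>(i,j). A $$ (i div dim_row B, j div dim_col B) * B $$ (i mod dim_row B, j mod dim_col B))"

definition ptrace_B :: "nat \<Rightarrow> nat \<Rightarrow> complex mat \<Rightarrow> complex mat" where
  "ptrace_B dA dB M = mat dA dA (\<lambda>(a,a'). \<Sum>b<dB. M $$ (a*dB + b, a'*dB + b))"

definition unitary :: "nat \<Rightarrow> complex mat \<Rightarrow> bool" where
  "unitary n U \<longleftrightarrow> U \<in> carrier_mat n n \<and> dag U * U = 1\<^sub>m n \<and> U * dag U = 1\<^sub>m n"

definition psd :: "nat \<Rightarrow> complex mat \<Rightarrow> bool" where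
  "psd n A \<longleftrightarrow> A \<in> carrier_mat n n \<and> dag A = A \<and>
     (\<forall>v \<in> carrier_vec n. 0 \<le> Re ((A *\<^sub>v v) \<bullet>c v))"

definition density :: "nat \<Rightarrow> complex mat \<Rightarrow> bool" where
  "density n \<rho> \<longleftrightarrow> psd n \<rho> \<and> tr \<rho> = 1"

definition msqrt :: "complex mat \<Rightarrow> complex mat" where
  "msqrt A = (THE B. psd (dim_row A) B \<and> B * B = A)"

definition minv :: "complex mat \<Rightarrow> complex mat" where
  "minv A = (THE B. B \<in> carrier_mat (dim_row A) (dim_row A) \<and>
              A * B = 1\<^sub>m (dim_row A) \<and> B * A = 1\<^sub>m (dim_row A))"

definition msqrt_inv :: "complex mat \<Rightarrow> complex mat" where
  "msqrt_inv A = minv (msqrt A)"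

text \<open>Hilbert-Schmidt adjoint of a map E from m x m to n x n matrices:
 Tr(E[X] Y) = Tr(X E^dag[Y]); fixed to 0 outside its domain to make it unique.\<close>
definition hs_adjoint :: "nat \<Rightarrow> nat \<Rightarrow> (complex mat \<Rightarrow> complex mat) \<Rightarrow> complex mat \<Rightarrow> complex mat" where
  "hs_adjoint m n E = (THE F.
     (\<forall>Y \<in> carrier_mat n n. F Y \<in> carrier_mat m m \<and>
        (\<forall>X \<in> carrier_mat m m. tr (E X * Y) = tr (X * F Y))) \<and>
     (\<forall>Y. Y \<notin> carrier_mat n n \<longrightarrow> F Y = 0\<^sub>m m m))"

definition channel :: "nat \<Rightarrow> nat \<Rightarrow> complex mat \<Rightarrow> complex mat \<Rightarrow> complex mat \<Rightarrow> complex mat" where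
  "channel dA dB U \<beta> X = ptrace_B dA dB (U * tensor X \<beta> * dag U)"

definition petz :: "nat \<Rightarrow> (complex mat \<Rightarrow> complex mat) \<Rightarrow> complex mat \<Rightarrow> complex mat \<Rightarrow> complex mat" where
  "petz d E \<alpha> X = msqrt \<alpha> * hs_adjoint d d E (msqrt_inv (E \<alpha>) * X * msqrt_inv (E \<alpha>)) * msqrt \<alpha>"

definition A_map :: "nat \<Rightarrow> nat \<Rightarrow> complex mat \<Rightarrow> complex mat \<Rightarrow> complex mat" where
  "A_map dA dB \<Omega> X = msqrt \<Omega> *
     tensor (msqrt_inv (ptrace_B dA dB \<Omega>) * X * msqrt_inv (ptrace_B dA dB \<Omega>)) (1\<^sub>m dB) * msqrt \<Omega>"

end

theory Submission
  imports Defs "Jordan_Normal_Form.Spectral_Radius"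
begin

(* Write Y = E[alpha]^(-1/2) X E[alpha]^(-1/2), where E[alpha] = Tr_B Omega. Cyclicity of the trace
   gives E^dag[Y] = Tr_B[(1 (x) beta) U^dag (Y (x) 1) U]. Uniqueness of positive square roots gives
   sqrt Omega = U (sqrt alpha (x) sqrt beta) U^dag, so U^dag A_Omega[X] U is
   (sqrt alpha (x) sqrt beta) U^dag (Y (x) 1) U (sqrt alpha (x) sqrt beta). The partial trace commutes
   with multiplication by operators on H_A and is cyclic for operators on H_B, so this has partial
   trace sqrt alpha Tr_B[(1 (x) beta) U^dag (Y (x) 1) U] sqrt alpha, the Petz map.
   Square roots come from the spectral theorem for Hermitian matrices, proved by induction on the
   dimension by completing a normalised eigenvector to a unitary. *)

section \<open>Sums, products and the conjugate transpose\<close>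

lemma sum_lessThan_mult_nat:
  fixes a b :: nat
  shows "(\<Sum>k<a*b. g k) = (\<Sum>p<a. \<Sum>q<b. g (p*b+q))"
proof -
  have "(\<Sum>k<a*b. g k) = (\<Sum>p<a. sum g {p*b..<p*b+b})" using sum.nat_group[of g b a] by simp
  also have "\<dots> = (\<Sum>p<a. \<Sum>q<b. g (p*b+q))"
  proof (rule sum.cong[OF refl])
    fix p
    have "sum g {p*b..<p*b+b} = sum g {0+p*b..<b+p*b}" by (simp add: add.commute)
    also have "\<dots> = (\<Sum>q = 0..<b. g (q + p*b))" by (rule sum.shift_bounds_nat_ivl)
    finally show "sum g {p*b..<p*b+b} = (\<Sum>q<b. g (p*b+q))" by (simp add: atLeast0LessThan add.commute)
  qed
  finally show ?thesis .
qed

lemma mult_add_less_mult_nat: "a < m \<Longrightarrow> b < n \<Longrightarrow> a * n + b < m * (n::nat)"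
proof -
  assume "a < m" "b < n"
  then have "a * n + b < Suc a * n" by simp
  also have "\<dots> \<le> m * n" using \<open>a < m\<close> by (intro mult_le_mono1, simp)
  finally show ?thesis .
qed

(* The div/mod simprocs miss these when the divisor is a compound term such as dim_vec w. *)
lemma mult_add_div_mod_nat [simp]:
  fixes p q k :: nat
  assumes "q < k"
  shows "(p * k + q) div k = p" "(p * k + q) mod k = q"
  using assms by simp_all

lemma index_mult_mat_sum [simp]:
  "i < dim_row A \<Longrightarrow> j < dim_col B \<Longrightarrow> dim_col A = dim_row B \<Longrightarrow>
   (A * B) $$ (i,j) = (\<Sum>k<dim_col A. A $$ (i,k) * B $$ (k,j))"
  by (simp add: index_mult_mat scalar_prod_def atLeast0LessThan)

lemma index_mult_mat_vec_sum [simp]: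
  "i < dim_row A \<Longrightarrow> dim_vec x = dim_col A \<Longrightarrow> (A *\<^sub>v x) $ i = (\<Sum>k<dim_col A. A $$ (i,k) * x $ k)"
  by (simp add: scalar_prod_def atLeast0LessThan)

declare index_mult_mat(1) [simp del] index_mult_mat_vec [simp del]

lemma mod_less_of_less_mult: "i < a * (b::nat) \<Longrightarrow> i mod b < b"
  by (cases "b = 0") auto

lemma cscalar_prod_sum:
  "dim_vec w = dim_vec v \<Longrightarrow> v \<bullet>c w = (\<Sum>i<dim_vec v. v $ i * cnj (w $ i))"
  by (simp add: scalar_prod_def conjugate_vec_def conjugate_complex_def atLeast0LessThan)

lemma if_zero_mult_complex [simp]:
  "(if P then a else (0::complex)) * b = (if P then a * b else 0)"
  "b * (if P then a else (0::complex)) = (if P then b * a else 0)"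
  by auto

lemma dim_dag [simp]: "dim_row (dag A) = dim_col A" "dim_col (dag A) = dim_row A"
  by (auto simp: dag_def)

lemma index_dag [simp]: "i < dim_col A \<Longrightarrow> j < dim_row A \<Longrightarrow> dag A $$ (i,j) = cnj (A $$ (j,i))"
  by (simp add: dag_def)

lemma dag_carrier_mat [simp, intro]: "A \<in> carrier_mat n m \<Longrightarrow> dag A \<in> carrier_mat m n"
  unfolding carrier_mat_def by simp

lemma dag_dag [simp]: "dag (dag A) = A"
  by (rule eq_matI, auto)

lemma dag_one [simp]: "dag (1\<^sub>m n) = 1\<^sub>m n"
  by (rule eq_matI, auto)

lemma dag_mult:
  assumes "dim_col A = dim_row B"
  shows "dag (A * B) = dag B * dag A"
proof (rule eq_matI)
  fix i j assume "i < dim_row (dag B * dag A)" "j < dim_col (dag B * dag A)"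
  then have ij: "i < dim_col B" "j < dim_row A" by auto
  have "dag (A * B) $$ (i, j) = cnj (\<Sum>k<dim_col A. A $$ (j,k) * B $$ (k,i))"
    using ij assms by simp
  also have "\<dots> = (\<Sum>k<dim_col A. dag B $$ (i,k) * dag A $$ (k,j))"
    using ij assms by (auto simp: mult.commute intro!: sum.cong)
  also have "\<dots> = (dag B * dag A) $$ (i, j)"
    using ij assms by simp
  finally show "dag (A * B) $$ (i, j) = (dag B * dag A) $$ (i, j)" .
qed auto

lemma cscalar_prod_mult_mat_vec_dag:
  assumes A: "A \<in> carrier_mat n m" and x: "x \<in> carrier_vec m" and y: "y \<in> carrier_vec n"
  shows "(A *\<^sub>v x) \<bullet>c y = x \<bullet>c (dag A *\<^sub>v y)"
proof -
  have dA: "dim_row A = n" "dim_col A = m" using A by auto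
  have "(A *\<^sub>v x) \<bullet>c y = (\<Sum>i<n. (\<Sum>k<m. A $$ (i,k) * x $ k) * cnj (y $ i))"
    using x y dA by (simp add: cscalar_prod_sum)
  also have "\<dots> = (\<Sum>k<m. \<Sum>i<n. x $ k * cnj (cnj (A $$ (i,k)) * y $ i))"
    by (simp add: sum_distrib_right, subst sum.swap, simp add: mult_ac)
  also have "\<dots> = x \<bullet>c (dag A *\<^sub>v y)"
    using x y dA by (simp add: cscalar_prod_sum sum_distrib_left)
  finally show ?thesis .
qed

lemma tr_mult_comm:
  assumes A: "A \<in> carrier_mat n m" and B: "B \<in> carrier_mat m n"
  shows "tr (A * B) = tr (B * A)"
proof -
  have "tr (A * B) = (\<Sum>i<n. \<Sum>k<m. A $$ (i,k) * B $$ (k,i))"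
    unfolding tr_def using A B by (auto intro!: sum.cong)
  also have "\<dots> = (\<Sum>k<m. \<Sum>i<n. B $$ (k,i) * A $$ (i,k))"
    by (subst sum.swap, simp add: mult.commute)
  also have "\<dots> = tr (B * A)"
    unfolding tr_def using A B by (auto intro!: sum.cong)
  finally show ?thesis .
qed

section \<open>Tensor products and the partial trace\<close>

lemma dim_tensor [simp]:
  "dim_row (tensor A B) = dim_row A * dim_row B" "dim_col (tensor A B) = dim_col A * dim_col B"
  by (auto simp: tensor_def)

lemma tensor_carrier_mat [simp, intro]:
  "A \<in> carrier_mat a a' \<Longrightarrow> B \<in> carrier_mat b b' \<Longrightarrow> tensor A B \<in> carrier_mat (a*b) (a'*b')"
  unfolding carrier_mat_def by simp

lemma index_tensor:
  "i < dim_row A * dim_row B \<Longrightarrow> j < dim_col A * dim_col B \<Longrightarrow>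
   tensor A B $$ (i,j) = A $$ (i div dim_row B, j div dim_col B) * B $$ (i mod dim_row B, j mod dim_col B)"
  by (simp add: tensor_def)

lemma index_tensor_mult_add:
  assumes "A \<in> carrier_mat m m'" "B \<in> carrier_mat n n'" "a < m" "p < m'" "b < n" "q < n'"
  shows "tensor A B $$ (a*n+b, p*n'+q) = A $$ (a,p) * B $$ (b,q)"
  using assms by (subst index_tensor, auto intro: mult_add_less_mult_nat)

lemma dag_tensor: "dag (tensor A B) = tensor (dag A) (dag B)"
proof (rule eq_matI)
  fix i j assume "i < dim_row (tensor (dag A) (dag B))" "j < dim_col (tensor (dag A) (dag B))"
  then have ij: "j < dim_row A * dim_row B" "i < dim_col A * dim_col B" by auto
  then have "i div dim_col B < dim_col A" "i mod dim_col B < dim_col B"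
    "j div dim_row B < dim_row A" "j mod dim_row B < dim_row B"
    by (auto simp: less_mult_imp_div_less mod_less_of_less_mult)
  with ij show "dag (tensor A B) $$ (i, j) = tensor (dag A) (dag B) $$ (i, j)"
    by (simp add: index_tensor)
qed auto

lemma tensor_mult:
  assumes "dim_col A = dim_row C" "dim_col B = dim_row D"
  shows "tensor A B * tensor C D = tensor (A * C) (B * D)"
proof (rule eq_matI)
  fix i j assume "i < dim_row (tensor (A * C) (B * D))" "j < dim_col (tensor (A * C) (B * D))"
  then have ij: "i < dim_row A * dim_row B" "j < dim_col C * dim_col D" by auto
  define i1 where "i1 = i div dim_row B"
  define i2 where "i2 = i mod dim_row B"
  define j1 where "j1 = j div dim_col D"
  define j2 where "j2 = j mod dim_col D"
  have "(tensor A B * tensor C D) $$ (i,j) =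
      (\<Sum>p<dim_col A. \<Sum>q<dim_col B. tensor A B $$ (i, p * dim_col B + q) * tensor C D $$ (p * dim_col B + q, j))"
    using ij assms by (simp add: sum_lessThan_mult_nat)
  also have "\<dots> = (\<Sum>p<dim_col A. \<Sum>q<dim_col B. A $$ (i1, p) * B $$ (i2, q) * (C $$ (p, j1) * D $$ (q, j2)))"
    using ij assms unfolding i1_def i2_def j1_def j2_def
    by (intro sum.cong refl, simp add: index_tensor mult_add_less_mult_nat)
  also have "\<dots> = (\<Sum>p<dim_col A. A $$ (i1, p) * C $$ (p, j1)) * (\<Sum>q<dim_col B. B $$ (i2, q) * D $$ (q, j2))"
    by (simp add: sum_product mult_ac)
  also have "\<dots> = tensor (A * C) (B * D) $$ (i,j)"
    using ij assms unfolding i1_def i2_def j1_def j2_def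
    by (simp add: index_tensor less_mult_imp_div_less mod_less_of_less_mult)
  finally show "(tensor A B * tensor C D) $$ (i,j) = tensor (A * C) (B * D) $$ (i,j)" .
qed auto

lemma dim_ptrace_B [simp]: "dim_row (ptrace_B dA dB M) = dA" "dim_col (ptrace_B dA dB M) = dA"
  by (auto simp: ptrace_B_def)

lemma ptrace_B_carrier_mat [simp, intro]: "ptrace_B dA dB M \<in> carrier_mat dA dA"
  unfolding carrier_mat_def by simp

lemma index_ptrace_B:
  "a < dA \<Longrightarrow> a' < dA \<Longrightarrow> ptrace_B dA dB M $$ (a,a') = (\<Sum>b<dB. M $$ (a*dB + b, a'*dB + b))"
  by (simp add: ptrace_B_def)

lemma tr_ptrace_B:
  assumes "M \<in> carrier_mat (dA*dB) (dA*dB)"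
  shows "tr (ptrace_B dA dB M) = tr M"
  using assms by (simp add: tr_def index_ptrace_B sum_lessThan_mult_nat)

lemma dag_ptrace_B:
  assumes "M \<in> carrier_mat (dA*dB) (dA*dB)"
  shows "dag (ptrace_B dA dB M) = ptrace_B dA dB (dag M)"
  using assms by (intro eq_matI, auto simp: index_ptrace_B mult_add_less_mult_nat)

lemma ptrace_B_tensor_left:
  assumes X: "X \<in> carrier_mat dA dA" and M: "M \<in> carrier_mat (dA*dB) (dA*dB)"
  shows "ptrace_B dA dB (tensor X (1\<^sub>m dB) * M) = X * ptrace_B dA dB M"
proof (rule eq_matI)
  fix a a' assume "a < dim_row (X * ptrace_B dA dB M)" "a' < dim_col (X * ptrace_B dA dB M)"
  then have a: "a < dA" "a' < dA" using X by auto
  have "ptrace_B dA dB (tensor X (1\<^sub>m dB) * M) $$ (a,a') =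
     (\<Sum>b<dB. \<Sum>p<dA. \<Sum>q<dB. tensor X (1\<^sub>m dB) $$ (a*dB+b, p*dB+q) * M $$ (p*dB+q, a'*dB+b))"
    using a X M by (simp add: index_ptrace_B sum_lessThan_mult_nat mult_add_less_mult_nat)
  also have "\<dots> = (\<Sum>b<dB. \<Sum>p<dA. X $$ (a,p) * M $$ (p*dB+b, a'*dB+b))"
    using a X by (intro sum.cong refl, simp add: index_tensor_mult_add[of _ dA dA _ dB dB])
  also have "\<dots> = (X * ptrace_B dA dB M) $$ (a,a')"
    using a X by (simp add: index_ptrace_B sum_distrib_left, subst sum.swap, simp)
  finally show "ptrace_B dA dB (tensor X (1\<^sub>m dB) * M) $$ (a,a') = (X * ptrace_B dA dB M) $$ (a,a')" .
qed (use X in auto)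

lemma ptrace_B_tensor_right:
  assumes X: "X \<in> carrier_mat dA dA" and M: "M \<in> carrier_mat (dA*dB) (dA*dB)"
  shows "ptrace_B dA dB (M * tensor X (1\<^sub>m dB)) = ptrace_B dA dB M * X"
proof -
  have T: "tensor X (1\<^sub>m dB) \<in> carrier_mat (dA*dB) (dA*dB)" using X by auto
  have "ptrace_B dA dB (M * tensor X (1\<^sub>m dB)) = dag (ptrace_B dA dB (dag (M * tensor X (1\<^sub>m dB))))"
    using T M by (simp add: dag_ptrace_B)
  also have "\<dots> = dag (ptrace_B dA dB (tensor (dag X) (1\<^sub>m dB) * dag M))"
    using X M by (simp add: dag_mult dag_tensor)
  also have "\<dots> = dag (dag X * dag (ptrace_B dA dB M))"
    using X M by (simp add: ptrace_B_tensor_left dag_ptrace_B)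
  also have "\<dots> = ptrace_B dA dB M * X"
    using X by (simp add: dag_mult)
  finally show ?thesis .
qed

lemma ptrace_B_cyclic:
  assumes S: "S \<in> carrier_mat dB dB" and M: "M \<in> carrier_mat (dA*dB) (dA*dB)"
  shows "ptrace_B dA dB (tensor (1\<^sub>m dA) S * M) = ptrace_B dA dB (M * tensor (1\<^sub>m dA) S)"
proof (rule eq_matI)
  fix a a' assume "a < dim_row (ptrace_B dA dB (M * tensor (1\<^sub>m dA) S))"
    "a' < dim_col (ptrace_B dA dB (M * tensor (1\<^sub>m dA) S))"
  then have a: "a < dA" "a' < dA" by auto
  have "ptrace_B dA dB (tensor (1\<^sub>m dA) S * M) $$ (a,a') =
     (\<Sum>b<dB. \<Sum>p<dA. \<Sum>q<dB. tensor (1\<^sub>m dA) S $$ (a*dB+b, p*dB+q) * M $$ (p*dB+q, a'*dB+b))"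
    using a S M by (simp add: index_ptrace_B sum_lessThan_mult_nat mult_add_less_mult_nat)
  also have "\<dots> = (\<Sum>b<dB. \<Sum>q<dB. S $$ (b,q) * M $$ (a*dB+q, a'*dB+b))"
    using a S by (intro sum.cong[OF refl], subst sum.swap, simp add: index_tensor_mult_add[of _ dA dA _ dB dB])
  also have "\<dots> = (\<Sum>q<dB. \<Sum>b<dB. M $$ (a*dB+q, a'*dB+b) * S $$ (b,q))"
    by (subst sum.swap, simp add: mult.commute)
  also have "\<dots> = (\<Sum>q<dB. \<Sum>p<dA. \<Sum>b<dB. M $$ (a*dB+q, p*dB+b) * tensor (1\<^sub>m dA) S $$ (p*dB+b, a'*dB+q))"
    using a S by (intro sum.cong[OF refl], subst sum.swap, simp add: index_tensor_mult_add[of _ dA dA _ dB dB])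
  also have "\<dots> = ptrace_B dA dB (M * tensor (1\<^sub>m dA) S) $$ (a,a')"
    using a S M by (simp add: index_ptrace_B sum_lessThan_mult_nat mult_add_less_mult_nat)
  finally show "ptrace_B dA dB (tensor (1\<^sub>m dA) S * M) $$ (a,a') = ptrace_B dA dB (M * tensor (1\<^sub>m dA) S) $$ (a,a')" .
qed auto

lemma ptrace_B_tensor_sandwich:
  assumes P: "P \<in> carrier_mat dA dA" and Q: "Q \<in> carrier_mat dB dB" and N: "N \<in> carrier_mat (dA*dB) (dA*dB)"
  shows "ptrace_B dA dB (tensor P Q * N * tensor P Q) = P * ptrace_B dA dB (tensor (1\<^sub>m dA) (Q * Q) * N) * P"
proof -
  let ?n = "dA * dB"
  define Pt Qt where "Pt = tensor P (1\<^sub>m dB)" and "Qt = tensor (1\<^sub>m dA) Q"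
  have c: "Pt \<in> carrier_mat ?n ?n" "Qt \<in> carrier_mat ?n ?n"
    and QNQ: "Qt * N * Qt \<in> carrier_mat ?n ?n"
    and PQNQ: "tensor P (1\<^sub>m dB) * (Qt * N * Qt) \<in> carrier_mat ?n ?n"
    and QN: "tensor (1\<^sub>m dA) Q * N \<in> carrier_mat ?n ?n"
    unfolding Pt_def Qt_def using P Q N by auto
  have "tensor P Q = Pt * Qt" "tensor P Q = Qt * Pt" "tensor (1\<^sub>m dA) (Q * Q) = Qt * Qt"
    unfolding Pt_def Qt_def using P Q by (simp_all add: tensor_mult)
  then have "tensor P Q * N * tensor P Q = Pt * (Qt * N * Qt) * Pt"
    and QQ: "tensor (1\<^sub>m dA) (Q * Q) * N = Qt * (Qt * N)"
    using c N by (simp_all add: assoc_mult_mat[of _ ?n ?n _ ?n _ ?n] mult_carrier_mat[of _ ?n ?n _ ?n])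
  then have "ptrace_B dA dB (tensor P Q * N * tensor P Q) = ptrace_B dA dB (Pt * (Qt * N * Qt)) * P"
    unfolding Pt_def using ptrace_B_tensor_right[OF P PQNQ] by simp
  also have "\<dots> = P * ptrace_B dA dB (Qt * N * Qt) * P"
    unfolding Pt_def using ptrace_B_tensor_left[OF P QNQ] by simp
  also have "ptrace_B dA dB (Qt * N * Qt) = ptrace_B dA dB (Qt * (Qt * N))"
    unfolding Qt_def using ptrace_B_cyclic[OF Q QN] by simp
  finally show ?thesis unfolding QQ .
qed

section \<open>Positive semidefinite matrices\<close>

lemma dim_mat_diag [simp]: "dim_row (mat_diag n f) = n" "dim_col (mat_diag n f) = n"
  by (simp_all add: mat_diag_def)

lemma index_mat_diag [simp]: "i < n \<Longrightarrow> j < n \<Longrightarrow> mat_diag n f $$ (i,j) = (if i = j then f j else 0)"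
  by (simp add: mat_diag_def)

lemma psdD:
  assumes "psd n A"
  shows "A \<in> carrier_mat n n" "dag A = A" "v \<in> carrier_vec n \<Longrightarrow> 0 \<le> Re ((A *\<^sub>v v) \<bullet>c v)"
  using assms unfolding psd_def by auto

lemma psd_congruence:
  assumes P: "psd n P" and G: "G \<in> carrier_mat m n"
  shows "psd m (G * P * dag G)"
proof -
  have Pc: "P \<in> carrier_mat n n" using psdD[OF P] by simp
  have "dag (G * P * dag G) = G * (P * dag G)"
    using G Pc psdD(2)[OF P] by (simp add: dag_mult)
  also have "\<dots> = G * P * dag G"
    using assoc_mult_mat[OF G Pc dag_carrier_mat[OF G]] by simp
  finally have herm: "dag (G * P * dag G) = G * P * dag G" .
  have "0 \<le> Re ((G * P * dag G *\<^sub>v v) \<bullet>c v)" if v: "v \<in> carrier_vec m" for v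
  proof -
    define w where "w = dag G *\<^sub>v v"
    have w: "w \<in> carrier_vec n" unfolding w_def by (rule mult_mat_vec_carrier[OF dag_carrier_mat[OF G] v])
    have "G * P * dag G *\<^sub>v v = G * P *\<^sub>v w"
      unfolding w_def using G Pc v by (intro assoc_mult_mat_vec) auto
    also have "\<dots> = G *\<^sub>v (P *\<^sub>v w)"
      using G Pc w by (intro assoc_mult_mat_vec) auto
    finally have "(G * P * dag G *\<^sub>v v) \<bullet>c v = (P *\<^sub>v w) \<bullet>c w"
      using cscalar_prod_mult_mat_vec_dag[OF G _ v, of "P *\<^sub>v w"] Pc w unfolding w_def by simp
    then show ?thesis using psdD(3)[OF P w] by simp
  qed
  with G Pc herm show ?thesis unfolding psd_def by auto
qed

lemma psd_mat_diag:
  assumes "\<forall>i<n. 0 \<le> d i"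
  shows "psd n (mat_diag n (\<lambda>i. complex_of_real (d i)))"
proof -
  let ?D = "mat_diag n (\<lambda>i. complex_of_real (d i))"
  have "(?D *\<^sub>v v) \<bullet>c v = (\<Sum>i<n. complex_of_real (d i * (cmod (v $ i))\<^sup>2))" if v: "v \<in> carrier_vec n" for v
    using v by (auto simp: cscalar_prod_sum mult.assoc complex_mult_cnj cmod_def intro!: sum.cong)
  then have "0 \<le> Re ((?D *\<^sub>v v) \<bullet>c v)" if "v \<in> carrier_vec n" for v
    using that assms by (auto intro!: sum_nonneg)
  moreover have "dag ?D = ?D" by (rule eq_matI, auto)
  ultimately show ?thesis unfolding psd_def by auto
qed

lemma psd_one: "psd n (1\<^sub>m n)"
  using psd_mat_diag[of n "\<lambda>_. 1"] by simp

lemma psd_diag_nonneg: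
  assumes "psd n A" and i: "i < n"
  shows "0 \<le> Re (A $$ (i,i))"
proof -
  have "(A *\<^sub>v unit_vec n i) \<bullet>c unit_vec n i = A $$ (i,i)"
    using psdD(1)[OF assms(1)] i by (simp add: cscalar_prod_sum if_distrib[of cnj] cong: if_cong)
  then show ?thesis using psdD(3)[OF assms(1), of "unit_vec n i"] i by simp
qed

definition tensor_vec :: "complex vec \<Rightarrow> complex vec \<Rightarrow> complex vec" where
  "tensor_vec v w = vec (dim_vec v * dim_vec w) (\<lambda>k. v $ (k div dim_vec w) * w $ (k mod dim_vec w))"

lemma dim_tensor_vec [simp]: "dim_vec (tensor_vec v w) = dim_vec v * dim_vec w"
  by (simp add: tensor_vec_def)

lemma index_tensor_vec_mult_add:
  "p < dim_vec v \<Longrightarrow> q < dim_vec w \<Longrightarrow> tensor_vec v w $ (p * dim_vec w + q) = v $ p * w $ q"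
  by (simp add: tensor_vec_def mult_add_less_mult_nat)

lemma cscalar_prod_ptrace_B:
  assumes M: "M \<in> carrier_mat (dA*dB) (dA*dB)" and v: "v \<in> carrier_vec dA"
  shows "(ptrace_B dA dB M *\<^sub>v v) \<bullet>c v =
    (\<Sum>b<dB. (M *\<^sub>v tensor_vec v (unit_vec dB b)) \<bullet>c tensor_vec v (unit_vec dB b))"
proof -
  have *: "(M *\<^sub>v tensor_vec v (unit_vec dB b)) \<bullet>c tensor_vec v (unit_vec dB b) =
     (\<Sum>p<dA. \<Sum>p'<dA. M $$ (p*dB+b, p'*dB+b) * v $ p' * cnj (v $ p))" if b: "b < dB" for b
  proof -
    let ?x = "tensor_vec v (unit_vec dB b)"
    have x: "?x $ (p*dB+q) = (if q = b then v $ p else 0)" if "p < dA" "q < dB" for p q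
      using that v b index_tensor_vec_mult_add[of p v q "unit_vec dB b"] by auto
    have Mx: "(M *\<^sub>v ?x) $ (p*dB+b) = (\<Sum>p'<dA. M $$ (p*dB+b, p'*dB+b) * v $ p')" if "p < dA" for p
      using M v b that by (simp add: sum_lessThan_mult_nat mult_add_less_mult_nat x)
    have "(M *\<^sub>v ?x) \<bullet>c ?x = (\<Sum>p<dA. \<Sum>q<dB. (M *\<^sub>v ?x) $ (p*dB+q) * cnj (?x $ (p*dB+q)))"
      using M v by (simp add: cscalar_prod_sum sum_lessThan_mult_nat del: index_mult_mat_vec_sum)
    also have "\<dots> = (\<Sum>p<dA. (M *\<^sub>v ?x) $ (p*dB+b) * cnj (v $ p))"
      using b by (intro sum.cong refl) (simp add: x if_distrib[of cnj] cong: if_cong del: index_mult_mat_vec_sum)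
    finally show ?thesis
      by (simp add: Mx sum_distrib_right del: index_mult_mat_vec_sum)
  qed
  have "(ptrace_B dA dB M *\<^sub>v v) \<bullet>c v = (\<Sum>p<dA. \<Sum>p'<dA. \<Sum>b<dB. M $$ (p*dB+b, p'*dB+b) * v $ p' * cnj (v $ p))"
    using v by (simp add: cscalar_prod_sum index_ptrace_B sum_distrib_right)
  also have "\<dots> = (\<Sum>p<dA. \<Sum>b<dB. \<Sum>p'<dA. M $$ (p*dB+b, p'*dB+b) * v $ p' * cnj (v $ p))"
    by (rule sum.cong[OF refl], rule sum.swap)
  also have "\<dots> = (\<Sum>b<dB. \<Sum>p<dA. \<Sum>p'<dA. M $$ (p*dB+b, p'*dB+b) * v $ p' * cnj (v $ p))"
    by (rule sum.swap)
  finally show ?thesis by (simp add: *)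
qed

lemma psd_ptrace_B:
  assumes M: "psd (dA*dB) M"
  shows "psd dA (ptrace_B dA dB M)"
proof -
  have Mc: "M \<in> carrier_mat (dA*dB) (dA*dB)" using psdD[OF M] by simp
  have "0 \<le> Re ((ptrace_B dA dB M *\<^sub>v v) \<bullet>c v)" if v: "v \<in> carrier_vec dA" for v
  proof -
    have "tensor_vec v (unit_vec dB b) \<in> carrier_vec (dA*dB)" for b
      using v by (intro carrier_vecI) simp
    then show ?thesis
      unfolding cscalar_prod_ptrace_B[OF Mc v] Re_sum by (simp add: sum_nonneg psdD(3)[OF M])
  qed
  then show ?thesis
    unfolding psd_def using Mc psdD(2)[OF M] by (simp add: dag_ptrace_B)
qed

section \<open>Unitary matrices and the spectral theorem\<close>

lemma unitaryD:
  assumes "unitary n U"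
  shows "U \<in> carrier_mat n n" "dag U * U = 1\<^sub>m n" "U * dag U = 1\<^sub>m n"
  using assms unfolding unitary_def by auto

lemma unitary_conj_mult:
  assumes U: "unitary n U" and A: "A \<in> carrier_mat n n" and B: "B \<in> carrier_mat n n"
  shows "(U * A * dag U) * (U * B * dag U) = U * (A * B) * dag U"
proof -
  have Uc: "U \<in> carrier_mat n n" using unitaryD[OF U] by simp
  have "(U * A * dag U) * (U * B * dag U) = U * A * (dag U * U) * B * dag U"
    using Uc A B by (simp add: assoc_mult_mat[of _ n n _ n _ n] mult_carrier_mat[of _ n n _ n])
  also have "\<dots> = U * (A * B) * dag U"
    using unitaryD[OF U] A B by (simp add: assoc_mult_mat[of _ n n _ n _ n] mult_carrier_mat[of _ n n _ n])
  finally show ?thesis .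
qed

lemma unitary_dag_conj:
  assumes U: "unitary n U" and A: "A \<in> carrier_mat n n"
  shows "dag U * (U * A * dag U) * U = A"
proof -
  have Uc: "U \<in> carrier_mat n n" using unitaryD[OF U] by simp
  have "dag U * (U * A * dag U) * U = (dag U * U) * A * (dag U * U)"
    using Uc A by (simp add: assoc_mult_mat[of _ n n _ n _ n] mult_carrier_mat[of _ n n _ n])
  then show ?thesis using unitaryD[OF U] A by simp
qed

lemma unitary_conj_dag:
  assumes U: "unitary n U" and A: "A \<in> carrier_mat n n"
  shows "U * (dag U * A * U) * dag U = A"
proof -
  have Uc: "U \<in> carrier_mat n n" using unitaryD[OF U] by simp
  have "U * (dag U * A * U) * dag U = (U * dag U) * A * (U * dag U)"
    using Uc A by (simp add: assoc_mult_mat[of _ n n _ n _ n] mult_carrier_mat[of _ n n _ n])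
  then show ?thesis using unitaryD[OF U] A by simp
qed

lemma unitary_mult:
  assumes U: "unitary n U" and V: "unitary n V"
  shows "unitary n (U * V)"
proof -
  have Uc: "U \<in> carrier_mat n n" and Vc: "V \<in> carrier_mat n n" using unitaryD U V by auto
  have d: "dag (U * V) = dag V * dag U" using Uc Vc by (simp add: dag_mult)
  have "dag (U * V) * (U * V) = dag V * (dag U * U) * V"
    unfolding d using Uc Vc by (simp add: assoc_mult_mat[of _ n n _ n _ n] mult_carrier_mat[of _ n n _ n])
  moreover have "(U * V) * dag (U * V) = U * (V * dag V) * dag U"
    unfolding d using Uc Vc by (simp add: assoc_mult_mat[of _ n n _ n _ n] mult_carrier_mat[of _ n n _ n])
  ultimately show ?thesis
    using unitaryD[OF U] unitaryD[OF V] unfolding unitary_def by simp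
qed

lemma cscalar_prod_self:
  "v \<bullet>c v = complex_of_real (\<Sum>i<dim_vec v. (cmod (v $ i))\<^sup>2)"
  by (simp add: cscalar_prod_sum complex_mult_cnj cmod_def)

lemma unitary_of_corthogonal:
  assumes ws: "set ws \<subseteq> carrier_vec n" and orth: "corthogonal ws" and len: "length ws = n"
  shows "\<exists>r. unitary n (mat n n (\<lambda>(i,j). ws ! j $ i / complex_of_real (r j)))"
proof -
  define r where "r j = sqrt (\<Sum>i<n. (cmod (ws ! j $ i))\<^sup>2)" for j
  have wsc: "ws ! j \<in> carrier_vec n" if "j < n" for j using ws len that by auto
  have rr: "ws ! j \<bullet>c ws ! j = complex_of_real ((r j)\<^sup>2)" if j: "j < n" for j
    using cscalar_prod_self[of "ws ! j"] wsc[OF j] unfolding r_def by (simp add: sum_nonneg)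
  have r0: "r j \<noteq> 0" if j: "j < n" for j
    using rr[OF j] corthogonalD[OF orth, of j j] len j by auto
  define U where "U = mat n n (\<lambda>(i,j). ws ! j $ i / complex_of_real (r j))"
  have Uc: "U \<in> carrier_mat n n" unfolding U_def by simp
  have "dag U * U = 1\<^sub>m n"
  proof (rule eq_matI)
    fix i j assume "i < dim_row (1\<^sub>m n)" "j < dim_col (1\<^sub>m n)"
    then have i: "i < n" and j: "j < n" by auto
    have "(dag U * U) $$ (i,j) = (\<Sum>k<n. ws ! j $ k * cnj (ws ! i $ k)) / (complex_of_real (r i) * complex_of_real (r j))"
      using i j Uc by (simp add: U_def sum_divide_distrib mult.commute)
    also have "(\<Sum>k<n. ws ! j $ k * cnj (ws ! i $ k)) = ws ! j \<bullet>c ws ! i"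
      using wsc[OF i] wsc[OF j] by (simp add: cscalar_prod_sum)
    finally show "(dag U * U) $$ (i,j) = 1\<^sub>m n $$ (i,j)"
      using rr[OF i] r0[OF i] corthogonalD[OF orth, of j i] len i j by (cases "i = j") (simp_all add: power2_eq_square)
  qed (use Uc in auto)
  moreover then have "U * dag U = 1\<^sub>m n"
    using mat_mult_left_right_inverse[of "dag U" n U] Uc by auto
  ultimately show ?thesis using Uc unfolding unitary_def U_def by blast
qed

lemma unitary_with_first_col:
  assumes v: "v \<in> carrier_vec n" and v0: "v \<noteq> 0\<^sub>v n"
  shows "\<exists>U c. unitary n U \<and> col U 0 = c \<cdot>\<^sub>v v"
proof -
  interpret cof_vec_space n "TYPE(complex)" .
  define b where "b = basis_completion v"
  define ws where "ws = gram_schmidt n b"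
  from basis_completion[OF v v0, folded b_def]
  have dist_b: "distinct b" and indep: "\<not> lin_dep (set b)" and b: "set b \<subseteq> carrier_vec n"
    and hdb: "hd b = v" and len_b: "length b = n" by auto
  have n: "n > 0" using v v0 by (cases n, auto)
  from hdb len_b n obtain vs where bv: "b = v # vs" by (cases b, auto)
  from gram_schmidt_result[OF b dist_b indep refl, folded ws_def]
  have ws: "set ws \<subseteq> carrier_vec n" "corthogonal ws" "length ws = n" by (auto simp: len_b)
  have "hd ws = v" using gram_schmidt_hd[OF v, of vs, folded bv] unfolding ws_def .
  then have ws0: "ws ! 0 = v" using n ws(3) by (cases ws, auto)
  from unitary_of_corthogonal[OF ws] obtain r
    where "unitary n (mat n n (\<lambda>(i,j). ws ! j $ i / complex_of_real (r j)))" ..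
  moreover have "col (mat n n (\<lambda>(i,j). ws ! j $ i / complex_of_real (r j))) 0 = (1 / complex_of_real (r 0)) \<cdot>\<^sub>v v"
    using n v ws0 by (intro eq_vecI) auto
  ultimately show ?thesis by blast
qed

definition prepend_diag :: "complex \<Rightarrow> complex mat \<Rightarrow> complex mat" where
  "prepend_diag c M = mat (Suc (dim_row M)) (Suc (dim_col M))
     (\<lambda>(i,j). if i = 0 \<and> j = 0 then c else if i = 0 \<or> j = 0 then 0 else M $$ (i - 1, j - 1))"

lemma dim_prepend_diag [simp]:
  "dim_row (prepend_diag c M) = Suc (dim_row M)" "dim_col (prepend_diag c M) = Suc (dim_col M)"
  by (simp_all add: prepend_diag_def)

lemma index_prepend_diag:
  "i < Suc (dim_row M) \<Longrightarrow> j < Suc (dim_col M) \<Longrightarrow> prepend_diag c M $$ (i,j) =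
    (if i = 0 \<and> j = 0 then c else if i = 0 \<or> j = 0 then 0 else M $$ (i - 1, j - 1))"
  by (simp add: prepend_diag_def)

lemma prepend_diag_mult:
  assumes "dim_col M = dim_row N"
  shows "prepend_diag c M * prepend_diag d N = prepend_diag (c * d) (M * N)"
proof (rule eq_matI)
  fix i j assume "i < dim_row (prepend_diag (c * d) (M * N))" "j < dim_col (prepend_diag (c * d) (M * N))"
  then have i: "i < Suc (dim_row M)" and j: "j < Suc (dim_col N)" by auto
  have "(prepend_diag c M * prepend_diag d N) $$ (i,j) =
      prepend_diag c M $$ (i,0) * prepend_diag d N $$ (0,j) +
      (\<Sum>t<dim_col M. prepend_diag c M $$ (i, Suc t) * prepend_diag d N $$ (Suc t, j))"
    using i j assms by (simp add: sum.lessThan_Suc_shift del: sum.lessThan_Suc)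
  also have "\<dots> = prepend_diag (c * d) (M * N) $$ (i,j)"
    using i j assms by (cases i; cases j) (auto simp: index_prepend_diag intro!: sum.cong)
  finally show "(prepend_diag c M * prepend_diag d N) $$ (i,j) = prepend_diag (c * d) (M * N) $$ (i,j)" .
qed auto

lemma dag_prepend_diag: "dag (prepend_diag c M) = prepend_diag (cnj c) (dag M)"
  by (rule eq_matI, auto simp: index_prepend_diag)

lemma prepend_diag_one: "prepend_diag 1 (1\<^sub>m m) = 1\<^sub>m (Suc m)"
  by (rule eq_matI, auto simp: index_prepend_diag)

lemma prepend_diag_mat_diag:
  "prepend_diag (complex_of_real r) (mat_diag m (\<lambda>i. complex_of_real (d i))) =
   mat_diag (Suc m) (\<lambda>i. complex_of_real (case i of 0 \<Rightarrow> r | Suc i' \<Rightarrow> d i'))"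
  by (rule eq_matI, auto simp: index_prepend_diag split: nat.split)

lemma unitary_prepend_diag:
  assumes "unitary m V"
  shows "unitary (Suc m) (prepend_diag 1 V)"
  using unitaryD[OF assms] unfolding unitary_def dag_prepend_diag
  by (auto simp: prepend_diag_mult prepend_diag_one intro!: carrier_matI)

lemma unitary_conj_first_col_eigen:
  assumes U: "unitary n U" and A: "A \<in> carrier_mat n n"
    and ev: "A *\<^sub>v col U 0 = lam \<cdot>\<^sub>v col U 0" and i: "i < n"
  shows "(dag U * A * U) $$ (i,0) = (if i = 0 then lam else 0)"
proof -
  have Uc: "U \<in> carrier_mat n n" using unitaryD[OF U] by simp
  have AU: "(A * U) $$ (k,0) = lam * U $$ (k,0)" if k: "k < n" for k
    using arg_cong[OF ev, of "\<lambda>w. w $ k"] k i A Uc by simp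
  have "(dag U * A * U) $$ (i,0) = (\<Sum>k<n. dag U $$ (i,k) * (A * U) $$ (k,0))"
    using i A Uc by (simp add: assoc_mult_mat[of _ n n _ n _ n])
  also have "\<dots> = lam * (dag U * U) $$ (i,0)"
    using i Uc by (simp add: AU sum_distrib_left mult.left_commute)
  finally show ?thesis using unitaryD(2)[OF U] i by simp
qed

lemma hermitian_first_col_prepend_diag:
  assumes B: "B \<in> carrier_mat (Suc m) (Suc m)" and herm: "dag B = B"
    and col0: "\<forall>i<Suc m. B $$ (i,0) = (if i = 0 then lam else 0)"
  shows "\<exists>r C. C \<in> carrier_mat m m \<and> dag C = C \<and> B = prepend_diag (complex_of_real r) C"
proof -
  have entry: "B $$ (i,j) = cnj (B $$ (j,i))" if "i < Suc m" "j < Suc m" for i j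
    using arg_cong[OF herm, of "\<lambda>M. M $$ (i,j)"] that B by simp
  have "cnj lam = lam" using entry[of 0 0] col0 by simp
  then have lam: "lam = complex_of_real (Re lam)" by (simp add: complex_eq_iff)
  define C where "C = mat m m (\<lambda>(i,j). B $$ (Suc i, Suc j))"
  have Cc: "C \<in> carrier_mat m m" unfolding C_def by simp
  have "dag C = C"
  proof (rule eq_matI)
    fix i j assume "i < dim_row C" "j < dim_col C"
    then show "dag C $$ (i,j) = C $$ (i,j)" using entry[of "Suc i" "Suc j"] Cc by (simp add: C_def)
  qed (use Cc in auto)
  moreover have "B = prepend_diag lam C"
  proof (rule eq_matI)
    fix i j assume "i < dim_row (prepend_diag lam C)" "j < dim_col (prepend_diag lam C)"
    then have i: "i < Suc m" and j: "j < Suc m" using Cc by auto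
    show "B $$ (i,j) = prepend_diag lam C $$ (i,j)"
    proof (cases "i = 0 \<or> j = 0")
      case True
      then show ?thesis using i j Cc col0 entry[of 0 j] by (auto simp: index_prepend_diag)
    next
      case False
      then obtain i' j' where "i = Suc i'" "j = Suc j'" by (cases i; cases j) auto
      then show ?thesis using i j Cc by (simp add: index_prepend_diag C_def)
    qed
  qed (use B Cc in auto)
  ultimately show ?thesis using Cc lam by metis
qed

lemma hermitian_deflation:
  assumes A: "A \<in> carrier_mat (Suc m) (Suc m)" and herm: "dag A = A"
  shows "\<exists>U r C. unitary (Suc m) U \<and> C \<in> carrier_mat m m \<and> dag C = C \<and>
           A = U * prepend_diag (complex_of_real r) C * dag U"
proof -
  let ?n = "Suc m"
  from spectrum_non_empty[OF A] obtain lam where "eigenvalue A lam" unfolding spectrum_def by auto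
  then obtain v where v: "v \<in> carrier_vec ?n" "v \<noteq> 0\<^sub>v ?n" "A *\<^sub>v v = lam \<cdot>\<^sub>v v"
    unfolding eigenvalue_def eigenvector_def using A by auto
  from unitary_with_first_col[OF v(1,2)] obtain U c where U: "unitary ?n U" and cU: "col U 0 = c \<cdot>\<^sub>v v"
    by auto
  have Uc: "U \<in> carrier_mat ?n ?n" using unitaryD[OF U] by simp
  have "A *\<^sub>v col U 0 = lam \<cdot>\<^sub>v col U 0"
    unfolding cU using A v by (simp add: mult_mat_vec smult_smult_assoc mult.commute)
  then have col0: "\<forall>i<?n. (dag U * A * U) $$ (i,0) = (if i = 0 then lam else 0)"
    using unitary_conj_first_col_eigen[OF U A] by blast
  have "dag (dag U * A * U) = dag U * A * U"
    using A Uc herm by (simp add: dag_mult assoc_mult_mat[of _ ?n ?n _ ?n _ ?n] mult_carrier_mat[of _ ?n ?n _ ?n])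
  moreover have "dag U * A * U \<in> carrier_mat ?n ?n" using A Uc by auto
  ultimately obtain r C where C: "C \<in> carrier_mat m m" "dag C = C"
    and B: "dag U * A * U = prepend_diag (complex_of_real r) C"
    using hermitian_first_col_prepend_diag col0 by blast
  have "A = U * prepend_diag (complex_of_real r) C * dag U"
    using unitary_conj_dag[OF U A] B by simp
  with U C show ?thesis by blast
qed

theorem hermitian_spectral:
  assumes "A \<in> carrier_mat n n" and "dag A = A"
  shows "\<exists>U d. unitary n U \<and> A = U * mat_diag n (\<lambda>i. complex_of_real (d i)) * dag U"
  using assms
proof (induction n arbitrary: A)
  case 0
  then show ?case
    by (intro exI[of _ "1\<^sub>m 0"]) (auto simp: unitary_def intro!: eq_matI)
next
  case (Suc m)
  from hermitian_deflation[OF Suc.prems] obtain U r C where U: "unitary (Suc m) U"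
    and C: "C \<in> carrier_mat m m" "dag C = C" and AU: "A = U * prepend_diag (complex_of_real r) C * dag U"
    by blast
  from Suc.IH[OF C] obtain V d where V: "unitary m V"
    and CV: "C = V * mat_diag m (\<lambda>i. complex_of_real (d i)) * dag V" by blast
  define W where "W = prepend_diag 1 V"
  define D where "D = mat_diag (Suc m) (\<lambda>i. complex_of_real (case i of 0 \<Rightarrow> r | Suc i' \<Rightarrow> d i'))"
  have W: "unitary (Suc m) W" unfolding W_def by (rule unitary_prepend_diag[OF V])
  have Wc: "W \<in> carrier_mat (Suc m) (Suc m)" and Uc: "U \<in> carrier_mat (Suc m) (Suc m)"
    using unitaryD W U by auto
  have "prepend_diag (complex_of_real r) C = W * D * dag W"
    unfolding CV W_def D_def dag_prepend_diag using unitaryD[OF V]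
    by (simp add: prepend_diag_mult prepend_diag_mat_diag[symmetric])
  then have "A = U * (W * D * dag W) * dag U" unfolding AU by simp
  also have "\<dots> = (U * W) * D * (dag W * dag U)"
    using Uc Wc by (simp add: D_def assoc_mult_mat[of _ "Suc m" "Suc m" _ "Suc m" _ "Suc m"]
        mult_carrier_mat[of _ "Suc m" "Suc m" _ "Suc m"])
  also have "dag W * dag U = dag (U * W)" using Uc Wc by (simp add: dag_mult)
  finally have "A = (U * W) * D * dag (U * W)" .
  with unitary_mult[OF U W] show ?case unfolding D_def by blast
qed

lemma psd_spectral:
  assumes A: "psd n A"
  shows "\<exists>U d. unitary n U \<and> (\<forall>i<n. 0 \<le> d i) \<and> A = U * mat_diag n (\<lambda>i. complex_of_real (d i)) * dag U"
proof -
  from hermitian_spectral[OF psdD(1,2)[OF A]] obtain U d where U: "unitary n U"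
    and Ad: "A = U * mat_diag n (\<lambda>i. complex_of_real (d i)) * dag U" by blast
  have "psd n (dag U * A * dag (dag U))"
    using psd_congruence[OF A dag_carrier_mat[OF unitaryD(1)[OF U]]] .
  then have "psd n (mat_diag n (\<lambda>i. complex_of_real (d i)))"
    using unitary_dag_conj[OF U, of "mat_diag n (\<lambda>i. complex_of_real (d i))"] Ad by simp
  then have "\<forall>i<n. 0 \<le> d i"
    using psd_diag_nonneg[of n "mat_diag n (\<lambda>i. complex_of_real (d i))"] by simp
  with U Ad show ?thesis by blast
qed

section \<open>Positive square roots\<close>

lemma psd_sqrt_exists:
  assumes "psd n A"
  shows "\<exists>B. psd n B \<and> B * B = A"
proof -
  from psd_spectral[OF assms] obtain U d where U: "unitary n U" and d: "\<forall>i<n. 0 \<le> d i"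
    and Ad: "A = U * mat_diag n (\<lambda>i. complex_of_real (d i)) * dag U" by blast
  define S where "S = mat_diag n (\<lambda>i. complex_of_real (sqrt (d i)))"
  have Sc: "S \<in> carrier_mat n n" unfolding S_def by simp
  have "psd n (U * S * dag U)"
    unfolding S_def using psd_congruence[OF psd_mat_diag unitaryD(1)[OF U]] d by simp
  moreover have "(U * S * dag U) * (U * S * dag U) = U * (S * S) * dag U"
    by (rule unitary_conj_mult[OF U Sc Sc])
  moreover have "S * S = mat_diag n (\<lambda>i. complex_of_real (d i))"
    unfolding S_def mat_diag_diag using d by (intro eq_matI) (simp_all flip: of_real_mult)
  ultimately show ?thesis using Ad by metis
qed

lemma mat_diag_sqrt_intertwine:
  assumes s: "\<forall>i<n. 0 \<le> s i" and e: "\<forall>i<n. 0 \<le> e i" and G: "G \<in> carrier_mat n n"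
    and sq: "mat_diag n (\<lambda>i. complex_of_real (s i * s i)) * G = G * mat_diag n (\<lambda>i. complex_of_real (e i * e i))"
  shows "mat_diag n (\<lambda>i. complex_of_real (s i)) * G = G * mat_diag n (\<lambda>i. complex_of_real (e i))"
proof (rule eq_matI)
  fix i j assume "i < dim_row (G * mat_diag n (\<lambda>i. complex_of_real (e i)))"
    "j < dim_col (G * mat_diag n (\<lambda>i. complex_of_real (e i)))"
  then have i: "i < n" and j: "j < n" using G by auto
  have "complex_of_real (s i * s i) * G $$ (i,j) = G $$ (i,j) * complex_of_real (e j * e j)"
    using arg_cong[OF sq, of "\<lambda>M. M $$ (i,j)"] G i j by (simp add: mat_diag_mult_left mat_diag_mult_right)
  then have "G $$ (i,j) = 0 \<or> s i * s i = e j * e j"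
    by (metis mult.commute mult_cancel_left of_real_eq_iff)
  moreover have "s i * s i = e j * e j \<Longrightarrow> s i = e j"
    using s e i j by (metis abs_of_nonneg real_sqrt_abs2)
  ultimately have "complex_of_real (s i) * G $$ (i,j) = G $$ (i,j) * complex_of_real (e j)"
    by auto
  then show "(mat_diag n (\<lambda>i. complex_of_real (s i)) * G) $$ (i,j) =
      (G * mat_diag n (\<lambda>i. complex_of_real (e i))) $$ (i,j)"
    using G i j by (simp add: mat_diag_mult_left mat_diag_mult_right)
qed (use G in auto)

lemma psd_sqrt_unique:
  assumes B: "psd n B" and C: "psd n C" and BC: "B * B = C * C"
  shows "B = C"
proof -
  from psd_spectral[OF B] obtain U s where U: "unitary n U" and s: "\<forall>i<n. 0 \<le> s i"
    and Bs: "B = U * mat_diag n (\<lambda>i. complex_of_real (s i)) * dag U" by blast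
  from psd_spectral[OF C] obtain V e where V: "unitary n V" and e: "\<forall>i<n. 0 \<le> e i"
    and Ce: "C = V * mat_diag n (\<lambda>i. complex_of_real (e i)) * dag V" by blast
  define S E where "S = mat_diag n (\<lambda>i. complex_of_real (s i))" and "E = mat_diag n (\<lambda>i. complex_of_real (e i))"
  define G where "G = dag U * V"
  have Uc: "U \<in> carrier_mat n n" and Vc: "V \<in> carrier_mat n n" using unitaryD U V by auto
  have c: "S \<in> carrier_mat n n" "E \<in> carrier_mat n n" "G \<in> carrier_mat n n"
    unfolding S_def E_def G_def using Uc Vc by auto
  have "U * (S * S) * dag U = V * (E * E) * dag V"
    using BC unfolding Bs Ce S_def E_def by (simp add: unitary_conj_mult[OF U] unitary_conj_mult[OF V])
  then have "dag U * (U * (S * S) * dag U) * V = dag U * (V * (E * E) * dag V) * V" by simp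
  then have "(dag U * U) * (S * S) * G = G * (E * E) * (dag V * V)"
    unfolding G_def using Uc Vc c by (simp add: assoc_mult_mat[of _ n n _ n _ n] mult_carrier_mat[of _ n n _ n])
  then have "S * G = G * E"
    \<comment> \<open>squaring is injective on the nonnegative diagonal entries\<close>
    using mat_diag_sqrt_intertwine[OF s e c(3)] unitaryD U V c unfolding S_def E_def by simp
  have "B = U * S * dag U * (V * dag V)"
    using Bs unitaryD(3)[OF V] Uc c unfolding S_def by simp
  also have "\<dots> = U * (S * G) * dag V"
    unfolding G_def using Uc Vc c by (simp add: assoc_mult_mat[of _ n n _ n _ n] mult_carrier_mat[of _ n n _ n])
  also have "\<dots> = (U * dag U) * V * E * dag V"
    unfolding \<open>S * G = G * E\<close> unfolding G_def using Uc Vc c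
    by (simp add: assoc_mult_mat[of _ n n _ n _ n] mult_carrier_mat[of _ n n _ n])
  also have "\<dots> = C" using Ce unitaryD(3)[OF U] Vc unfolding E_def by simp
  finally show ?thesis .
qed

lemma msqrt_eqI:
  assumes "psd n B" and "B * B = A"
  shows "msqrt A = B"
proof -
  have "dim_row A = n" using assms psdD(1)[OF assms(1)] by auto
  then show ?thesis
    unfolding msqrt_def using assms psd_sqrt_unique by (intro the_equality) auto
qed

lemma
  assumes "psd n A"
  shows psd_msqrt: "psd n (msqrt A)" and msqrt_mult_msqrt: "msqrt A * msqrt A = A"
  using psd_sqrt_exists[OF assms] msqrt_eqI by metis+

lemma psd_tensor:
  assumes P: "psd m P" and Q: "psd n Q"
  shows "psd (m * n) (tensor P Q)"
proof -
  define K where "K = tensor (msqrt P) (msqrt Q)"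
  have c: "msqrt P \<in> carrier_mat m m" "msqrt Q \<in> carrier_mat n n"
    using psdD(1)[OF psd_msqrt[OF P]] psdD(1)[OF psd_msqrt[OF Q]] .
  have "dag K = K"
    unfolding K_def dag_tensor using psdD(2)[OF psd_msqrt[OF P]] psdD(2)[OF psd_msqrt[OF Q]] by simp
  moreover have "tensor P Q = K * K"
    unfolding K_def using c by (simp add: tensor_mult msqrt_mult_msqrt[OF P] msqrt_mult_msqrt[OF Q])
  moreover have "K \<in> carrier_mat (m * n) (m * n)" unfolding K_def using c by auto
  ultimately show ?thesis using psd_congruence[OF psd_one, of K] by simp
qed

lemma msqrt_unitary_conj_tensor:
  assumes U: "unitary (m * n) U" and P: "psd m P" and Q: "psd n Q"
  shows "msqrt (U * tensor P Q * dag U) = U * tensor (msqrt P) (msqrt Q) * dag U"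
proof (rule msqrt_eqI)
  have c: "msqrt P \<in> carrier_mat m m" "msqrt Q \<in> carrier_mat n n"
    using psdD(1)[OF psd_msqrt[OF P]] psdD(1)[OF psd_msqrt[OF Q]] .
  show "psd (m * n) (U * tensor (msqrt P) (msqrt Q) * dag U)"
    using psd_congruence[OF psd_tensor[OF psd_msqrt[OF P] psd_msqrt[OF Q]] unitaryD(1)[OF U]] .
  show "(U * tensor (msqrt P) (msqrt Q) * dag U) * (U * tensor (msqrt P) (msqrt Q) * dag U) = U * tensor P Q * dag U"
    using c by (simp add: unitary_conj_mult[OF U] tensor_mult msqrt_mult_msqrt[OF P] msqrt_mult_msqrt[OF Q])
qed

lemma minv_eqI:
  assumes T: "T \<in> carrier_mat n n" and S: "S \<in> carrier_mat n n" and TS: "T * S = 1\<^sub>m n"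
  shows "minv T = S"
  unfolding minv_def
proof (rule the_equality)
  show "S \<in> carrier_mat (dim_row T) (dim_row T) \<and> T * S = 1\<^sub>m (dim_row T) \<and> S * T = 1\<^sub>m (dim_row T)"
    using T S TS mat_mult_left_right_inverse[OF T S TS] by simp
next
  fix C assume "C \<in> carrier_mat (dim_row T) (dim_row T) \<and> T * C = 1\<^sub>m (dim_row T) \<and> C * T = 1\<^sub>m (dim_row T)"
  then have C: "C \<in> carrier_mat n n" and CT: "C * T = 1\<^sub>m n" using T by auto
  have "C = (C * T) * S" using C T S TS by (simp add: assoc_mult_mat[of _ n n _ n _ n])
  then show "C = S" using CT S by simp
qed

lemma minv_carrier_mat_of_square:
  assumes T: "T \<in> carrier_mat n n" and inv: "invertible_mat (T * T)"
  shows "minv T \<in> carrier_mat n n"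
proof -
  from inv obtain B where "inverts_mat (T * T) B" "inverts_mat B (T * T)"
    unfolding invertible_mat_def by blast
  then have TTB: "T * T * B = 1\<^sub>m n" and BTT: "B * (T * T) = 1\<^sub>m (dim_row B)"
    unfolding inverts_mat_def using T by simp_all
  have "dim_col B = n" using arg_cong[OF TTB, of dim_col] by simp
  moreover have "dim_row B = n" using arg_cong[OF BTT, of dim_col] T by simp
  ultimately have B: "B \<in> carrier_mat n n" by (rule carrier_matI[rotated])
  have "T * (T * B) = 1\<^sub>m n" using assoc_mult_mat[OF T T B] TTB by simp
  from minv_eqI[OF T _ this] show ?thesis using T B by simp
qed

lemma msqrt_inv_carrier_mat:
  assumes "psd n A" and "invertible_mat A"
  shows "msqrt_inv A \<in> carrier_mat n n"
  unfolding msqrt_inv_def using assms psdD(1)[OF psd_msqrt] msqrt_mult_msqrt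
  by (metis minv_carrier_mat_of_square)

section \<open>The Hilbert--Schmidt adjoint of the channel\<close>

lemma tr_mat_unit_mult:
  assumes Z: "Z \<in> carrier_mat m m" and i: "i < m" and j: "j < m"
  shows "tr (mat m m (\<lambda>(a,b). if a = j \<and> b = i then 1 else 0) * Z) = Z $$ (i,j)"
proof -
  have "tr (mat m m (\<lambda>(a,b). if a = j \<and> b = i then 1 else 0) * Z) =
      (\<Sum>a<m. \<Sum>b<m. if a = j \<and> b = i then Z $$ (b,a) else 0)"
    unfolding tr_def using Z by (auto intro!: sum.cong)
  also have "\<dots> = (\<Sum>a<m. if a = j then Z $$ (i,a) else 0)"
    using i by (intro sum.cong refl) (auto simp: sum.delta)
  finally show ?thesis using j by simp
qed

lemma eq_mat_of_tr_mult:
  assumes Z: "Z \<in> carrier_mat m m" and Z': "Z' \<in> carrier_mat m m"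
    and tr: "\<And>X. X \<in> carrier_mat m m \<Longrightarrow> tr (X * Z) = tr (X * Z')"
  shows "Z = Z'"
proof (rule eq_matI)
  fix i j assume "i < dim_row Z'" "j < dim_col Z'"
  then have i: "i < m" and j: "j < m" using Z' by auto
  show "Z $$ (i,j) = Z' $$ (i,j)"
    using tr[of "mat m m (\<lambda>(a,b). if a = j \<and> b = i then 1 else 0)"]
    unfolding tr_mat_unit_mult[OF Z i j] tr_mat_unit_mult[OF Z' i j] by simp
qed (use Z Z' in auto)

lemma hs_adjoint_eqI:
  assumes F: "\<forall>Y \<in> carrier_mat n n. F Y \<in> carrier_mat m m \<and> (\<forall>X \<in> carrier_mat m m. tr (E X * Y) = tr (X * F Y))"
    and F0: "\<forall>Y. Y \<notin> carrier_mat n n \<longrightarrow> F Y = 0\<^sub>m m m"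
  shows "hs_adjoint m n E = F"
  unfolding hs_adjoint_def
proof (rule the_equality)
  fix G assume G: "(\<forall>Y \<in> carrier_mat n n. G Y \<in> carrier_mat m m \<and>
      (\<forall>X \<in> carrier_mat m m. tr (E X * Y) = tr (X * G Y))) \<and> (\<forall>Y. Y \<notin> carrier_mat n n \<longrightarrow> G Y = 0\<^sub>m m m)"
  show "G = F"
  proof
    fix Y show "G Y = F Y"
      using G F F0 by (cases "Y \<in> carrier_mat n n") (auto intro!: eq_mat_of_tr_mult[of _ m])
  qed
qed (use F F0 in blast)

lemma tr_channel_mult:
  assumes U: "U \<in> carrier_mat (dA*dB) (dA*dB)" and \<beta>: "\<beta> \<in> carrier_mat dB dB"
    and X: "X \<in> carrier_mat dA dA" and Y: "Y \<in> carrier_mat dA dA"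
  shows "tr (channel dA dB U \<beta> X * Y) =
     tr (X * ptrace_B dA dB (tensor (1\<^sub>m dA) \<beta> * (dag U * tensor Y (1\<^sub>m dB) * U)))"
proof -
  let ?n = "dA*dB"
  define Tx Ty Ib where "Tx = tensor X (1\<^sub>m dB)" and "Ty = tensor Y (1\<^sub>m dB)" and "Ib = tensor (1\<^sub>m dA) \<beta>"
  have c: "Tx \<in> carrier_mat ?n ?n" "Ty \<in> carrier_mat ?n ?n" "Ib \<in> carrier_mat ?n ?n"
    unfolding Tx_def Ty_def Ib_def using X Y \<beta> by auto
  have XB: "tensor X \<beta> = Tx * Ib" unfolding Tx_def Ib_def using X \<beta> by (simp add: tensor_mult)
  have M: "U * (Tx * Ib) * dag U \<in> carrier_mat ?n ?n" and N: "Ib * (dag U * Ty * U) \<in> carrier_mat ?n ?n"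
    using U c by auto
  have "tr (channel dA dB U \<beta> X * Y) = tr (ptrace_B dA dB (U * (Tx * Ib) * dag U * Ty))"
    unfolding channel_def Ty_def XB using ptrace_B_tensor_right[OF Y M] by simp
  also have "\<dots> = tr (U * ((Tx * Ib) * dag U * Ty))"
    using U c by (simp add: tr_ptrace_B assoc_mult_mat[of _ ?n ?n _ ?n _ ?n] mult_carrier_mat[of _ ?n ?n _ ?n])
  also have "\<dots> = tr (((Tx * Ib) * dag U * Ty) * U)"
    using U c by (intro tr_mult_comm) auto
  also have "\<dots> = tr (ptrace_B dA dB (Tx * (Ib * (dag U * Ty * U))))"
    using U c by (simp add: tr_ptrace_B assoc_mult_mat[of _ ?n ?n _ ?n _ ?n] mult_carrier_mat[of _ ?n ?n _ ?n])
  also have "\<dots> = tr (X * ptrace_B dA dB (Ib * (dag U * Ty * U)))"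
    unfolding Tx_def using ptrace_B_tensor_left[OF X N] by simp
  finally show ?thesis unfolding Ib_def Ty_def .
qed

lemma hs_adjoint_channel:
  assumes U: "U \<in> carrier_mat (dA*dB) (dA*dB)" and \<beta>: "\<beta> \<in> carrier_mat dB dB"
  shows "hs_adjoint dA dA (channel dA dB U \<beta>) = (\<lambda>Y. if Y \<in> carrier_mat dA dA then
     ptrace_B dA dB (tensor (1\<^sub>m dA) \<beta> * (dag U * tensor Y (1\<^sub>m dB) * U)) else 0\<^sub>m dA dA)"
  by (rule hs_adjoint_eqI) (auto simp: tr_channel_mult[OF U \<beta>])

lemma psd_channel:
  assumes U: "U \<in> carrier_mat (dA*dB) (dA*dB)" and \<beta>: "psd dB \<beta>" and X: "psd dA X"
  shows "psd dA (channel dA dB U \<beta> X)"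
  unfolding channel_def using psd_ptrace_B[OF psd_congruence[OF psd_tensor[OF X \<beta>] U]] .

section \<open>The Petz recovery map\<close>

lemma unitary_dag_conj_sandwich:
  assumes U: "unitary n U" and K: "K \<in> carrier_mat n n" and T: "T \<in> carrier_mat n n"
  shows "dag U * ((U * K * dag U) * T * (U * K * dag U)) * U = K * (dag U * T * U) * K"
proof -
  have Uc: "U \<in> carrier_mat n n" using unitaryD[OF U] by simp
  have "dag U * ((U * K * dag U) * T * (U * K * dag U)) * U = (dag U * U) * K * (dag U * T * U) * K * (dag U * U)"
    using Uc K T by (simp add: assoc_mult_mat[of _ n n _ n _ n] mult_carrier_mat[of _ n n _ n])
  then show ?thesis using unitaryD[OF U] K T by simp
qed

theorem mainTheorem2:
  fixes dA dB :: nat and U \<alpha> \<beta> :: "complex mat"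
  assumes "unitary (dA * dB) U"
    and "density dB \<beta>"
    and "density dA \<alpha>"
    and "invertible_mat (channel dA dB U \<beta> \<alpha>)"
  shows "\<forall>X \<in> carrier_mat dA dA.
           petz dA (channel dA dB U \<beta>) \<alpha> X =
           ptrace_B dA dB (dag U * A_map dA dB (U * tensor \<alpha> \<beta> * dag U) X * U)"
proof
  fix X :: "complex mat" assume X: "X \<in> carrier_mat dA dA"
  let ?E = "channel dA dB U \<beta> \<alpha>"
  let ?Y = "msqrt_inv ?E * X * msqrt_inv ?E"
  let ?N = "dag U * tensor ?Y (1\<^sub>m dB) * U"
  let ?K = "tensor (msqrt \<alpha>) (msqrt \<beta>)"
  have U: "unitary (dA * dB) U" and Uc: "U \<in> carrier_mat (dA * dB) (dA * dB)"
    using assms(1) unitaryD(1) by auto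
  have \<alpha>: "psd dA \<alpha>" and \<beta>: "psd dB \<beta>" using assms(2,3) unfolding density_def by auto
  have sqrt_c: "msqrt \<alpha> \<in> carrier_mat dA dA" "msqrt \<beta> \<in> carrier_mat dB dB"
    using psdD(1)[OF psd_msqrt[OF \<alpha>]] psdD(1)[OF psd_msqrt[OF \<beta>]] .
  from msqrt_inv_carrier_mat[OF psd_channel[OF Uc \<beta> \<alpha>] assms(4)]
  have Y: "?Y \<in> carrier_mat dA dA" using X by (metis mult_carrier_mat)
  have N: "?N \<in> carrier_mat (dA * dB) (dA * dB)"
    using mult_carrier_mat[OF mult_carrier_mat[OF dag_carrier_mat[OF Uc] tensor_carrier_mat[OF Y one_carrier_mat]] Uc] .
  have "petz dA (channel dA dB U \<beta>) \<alpha> X = msqrt \<alpha> * ptrace_B dA dB (tensor (1\<^sub>m dA) \<beta> * ?N) * msqrt \<alpha>"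
    unfolding petz_def hs_adjoint_channel[OF Uc psdD(1)[OF \<beta>]] using Y by simp
  also have "\<dots> = ptrace_B dA dB (?K * ?N * ?K)"
    using ptrace_B_tensor_sandwich[OF sqrt_c N] msqrt_mult_msqrt[OF \<beta>] by simp
  also have "?K * ?N * ?K = dag U * A_map dA dB (U * tensor \<alpha> \<beta> * dag U) X * U"
    unfolding A_map_def msqrt_unitary_conj_tensor[OF U \<alpha> \<beta>] channel_def[symmetric]
    using unitary_dag_conj_sandwich[OF U _ tensor_carrier_mat[OF Y one_carrier_mat]] sqrt_c by simp
  finally show "petz dA (channel dA dB U \<beta>) \<alpha> X =
      ptrace_B dA dB (dag U * A_map dA dB (U * tensor \<alpha> \<beta> * dag U) X * U)" .
qed

end
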